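(* Let $n,m,k\ge1$, $C:\{0,1\}^n\to\{0,1\}^m$, $V:\{0,1\}^m\times\{0,1\}^\ell\to\{0,1\}$, $\varepsilon\in(0,1/25]$, $\alpha>1$, $p_H,p_{UH}\in[0,1]$ with $p_H\in[g_H\pm\frac45\sqrt\varepsilon]$ and $p_{UH}\in[g_{UH}\pm10\sqrt\varepsilon]$. Let $y_1,\dots,y_k\in\{0,1\}^m$ be arbitrary, let $u:[k]\to\mathbb{Z}_{\ge0}\cup\{\infty\}$, $\mathcal{Y}\subseteq[k]$ and $w_i\in\{0,1\}^\ell$ ($i\in\mathcal{Y}$), and let $\mathcal{L}=\{i\in[k]:2^{-(u(i)+1)\varepsilon}<\alpha2^{-m}\}$, $\mathcal{H}=[k]\setminus\mathcal{L}$. Assume: (a) $|\mathcal{Y}|/k\in[g_{UY}\pm\varepsilon]$; (b) $V(y_i,w_i)=1$ for all $i\in\mathcal{Y}$; (c) $|\mathcal{H}|/k\in[p_{UH}\pm3\sqrt\varepsilon]$; (d) $\frac1k\sum_{i\in\mathcal{L}}2^m2^{-u(i)\varepsilon}\in[1-p_H\pm5\sqrt\varepsilon]$; (1) $\Pr_{y\leftarrow\mathcal{D}^C}[\mathcal{D}^C(y)\in(1\pm4\varepsilon)\alpha2^{-m}]\le\sqrt\varepsilon$; (2) for all $i$: $u'(i)=\infty\Rightarrow u(i)=\infty$; (3) for all $i$: $u(i)=\infty$ or $\mathcal{D}^C(y_i)>(1-\varepsilon/2)2^{-(u(i)+1)\varepsilon}$; (4) $\frac1k|\{i:y_i\in\mathcal{M}\}|<3\sqrt\varepsilon/\alpha$;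 (5) $|\mathcal{Y}'|/k\in[g_{UY}\pm\varepsilon]$; (6) $|\mathcal{H}'|/k\in[g_{UH}\pm3\sqrt\varepsilon]$; (7) $\frac1k\sum_{i\in\mathcal{L}'}2^m2^{-u'(i)\varepsilon}\in[1-g_H\pm5\sqrt\varepsilon]$. Then: (i) $u(i)\ge u'(i)-1$ for all $i\in[k]$; (ii) $|\mathcal{L}'\setminus\mathcal{L}|\le3k\sqrt\varepsilon$; (iii) $|\mathcal{L}\setminus\mathcal{L}'|\le19k\sqrt\varepsilon$; (iv) $\frac1k\sum_{i\in\mathcal{L}'\setminus\mathcal{L}}2^m2^{-u'(i)\varepsilon}\le6\sqrt\varepsilon\alpha$ and $\frac1k\sum_{i\in\mathcal{L}\setminus\mathcal{L}'}2^m2^{-u(i)\varepsilon}\le38\sqrt\varepsilon\alpha$; (v) $\frac1k\sum_{i\in\mathcal{L}\cap\mathcal{L}'}2^m2^{-u(i)\varepsilon}\in[1-g_H\pm44\sqrt\varepsilon\alpha]$ and $\frac1k\sum_{i\in\mathcal{L}\cap\mathcal{L}'}2^m2^{-u'(i)\varepsilon}\in[1-g_H\pm11\sqrt\varepsilon\alpha]$; (vi) $\mathrm{Gain}_{\mathcal{L}\cap\mathcal{L}'}(u',u)\le4\varepsilon$ and $\mathrm{Loss}_{\mathcal{L}\cap\mathcal{L}'}(u',u)\le59\sqrt\varepsilon\alpha$.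
   Context: $\mathcal{D}^C(y)=\Pr_{r\leftarrow\{0,1\}^n}[C(r)=y]$ for uniform $r$. For $y\in\{0,1\}^m$ write $y\in V$ if there is $w$ with $V(y,w)=1$. Let $t=\lceil n/\varepsilon\rceil$, $\mathcal{B}_j=\{y:\mathcal{D}^C(y)\in(2^{-(j+1)\varepsilon},2^{-j\varepsilon}]\}$ for $j\in\{0,\dots,t\}$, and $u'(y)=j$ if $y\in\mathcal{B}_j$, $u'(y)=\infty$ otherwise; conventions $2^{-\infty\varepsilon}=0$, $j<\infty$, $\infty+j=\infty$. $g_H=\Pr_{y\leftarrow\mathcal{D}^C}[\mathcal{D}^C(y)\ge\alpha2^{-m}]$, $g_{UH}=\Pr_{y\text{ uniform}}[\mathcal{D}^C(y)\ge\alpha2^{-m}]$, $g_{UY}=\Pr_{y\text{ uniform}}[y\in V]$, $g_{YL}=\Pr_{y\leftarrow\mathcal{D}^C}[\mathcal{D}^C(y)<\alpha2^{-m}\wedge y\in V]$. For the given $y_1,\dots,y_k$: $u'(i):=u'(y_i)$, $\mathcal{Y}'=\{i:y_i\in V\}$, $\mathcal{L}'=\{i:2^{-(u'(i)+1)\varepsilon}<\alpha2^{-m}\}$, $\mathcal{H}'=[k]\setminus\mathcal{L}'$, $\mathcal{M}=\{y:\mathcal{D}^C(y)\in(1\pm4\varepsilon)\alpha2^{-m}\}$. For labelings $u',u$ of $[k]$ and $\mathcal{A}\subseteq[k]$: $\mathrm{Loss}_{\mathcal{A}}(u',u)=\frac1k\sum_{i\in\mathcal{A}:u'(i)<u(i)}2^m(2^{-u'(i)\varepsilon}-2^{-u(i)\varepsilon})$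 and $\mathrm{Gain}_{\mathcal{A}}(u',u)=\frac1k\sum_{i\in\mathcal{A}:u'(i)>u(i)}2^m(2^{-u(i)\varepsilon}-2^{-u'(i)\varepsilon})$. $[a\pm b]=[a-b,a+b]$, $(1\pm\delta)x=[(1-\delta)x,(1+\delta)x]$. *)

theory Defs
  imports Complex_Main "HOL-Library.Extended_Nat"
begin

definition bitstrings :: "nat \<Rightarrow> bool list set" where
  "bitstrings n = {xs. length xs = n}"

definition DC :: "(bool list \<Rightarrow> bool list) \<Rightarrow> nat \<Rightarrow> bool list \<Rightarrow> real" where
  "DC C n y = real (card {r \<in> bitstrings n. C r = y}) / 2 ^ n"

text \<open>Pr_{y <- D^C}[P y] = Pr_{r uniform}[P (C r)].\<close>
definition prD :: "(bool list \<Rightarrow> bool list) \<Rightarrow> nat \<Rightarrow> (bool list \<Rightarrow> bool) \<Rightarrow> real" where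
  "prD C n P = real (card {r \<in> bitstrings n. P (C r)}) / 2 ^ n"

definition prU :: "nat \<Rightarrow> (bool list \<Rightarrow> bool) \<Rightarrow> real" where
  "prU m P = real (card {y \<in> bitstrings m. P y}) / 2 ^ m"

definition inV :: "(bool list \<Rightarrow> bool list \<Rightarrow> bool) \<Rightarrow> nat \<Rightarrow> bool list \<Rightarrow> bool" where
  "inV V l y \<longleftrightarrow> (\<exists>w \<in> bitstrings l. V y w)"

definition pw :: "real \<Rightarrow> enat \<Rightarrow> real" where
  "pw \<epsilon> u = (case u of enat j \<Rightarrow> 2 powr (- (real j * \<epsilon>)) | \<infinity> \<Rightarrow> 0)"

definition inBucket :: "(bool list \<Rightarrow> bool list) \<Rightarrow> nat \<Rightarrow> real \<Rightarrow> nat \<Rightarrow> bool list \<Rightarrow> bool" where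
  "inBucket C n \<epsilon> j y \<longleftrightarrow>
     2 powr (- ((real j + 1) * \<epsilon>)) < DC C n y \<and> DC C n y \<le> 2 powr (- (real j * \<epsilon>))"

definition uprime :: "(bool list \<Rightarrow> bool list) \<Rightarrow> nat \<Rightarrow> real \<Rightarrow> bool list \<Rightarrow> enat" where
  "uprime C n \<epsilon> y =
     (let t = nat \<lceil>real n / \<epsilon>\<rceil> in
      if \<exists>j \<le> t. inBucket C n \<epsilon> j y
      then enat (LEAST j. j \<le> t \<and> inBucket C n \<epsilon> j y) else \<infinity>)"

definition pm :: "real \<Rightarrow> real \<Rightarrow> real set" where
  "pm a b = {a - b .. a + b}"

definition Loss :: "nat \<Rightarrow> nat \<Rightarrow> real \<Rightarrow> nat set \<Rightarrow> (nat \<Rightarrow> enat) \<Rightarrow> (nat \<Rightarrow> enat) \<Rightarrow> real" where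
  "Loss k m \<epsilon> A u' u =
     (1 / real k) * (\<Sum>i \<in> {i \<in> A. u' i < u i}. 2 ^ m * (pw \<epsilon> (u' i) - pw \<epsilon> (u i)))"

definition Gain :: "nat \<Rightarrow> nat \<Rightarrow> real \<Rightarrow> nat set \<Rightarrow> (nat \<Rightarrow> enat) \<Rightarrow> (nat \<Rightarrow> enat) \<Rightarrow> real" where
  "Gain k m \<epsilon> A u' u =
     (1 / real k) * (\<Sum>i \<in> {i \<in> A. u' i > u i}. 2 ^ m * (pw \<epsilon> (u i) - pw \<epsilon> (u' i)))"

end

theory Submission
  imports Defs "HOL-Analysis.Analysis"
begin

text \<open>
  By (3) and 2^-\<epsilon> \<le> 1 - \<epsilon>/2, D(y_i) exceeds 2^(-(u(i)+2)\<epsilon>), so y_i lies in no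
  bucket of index above u(i) + 1; with (2) this is (i). For i in L' - L the value D(y_i) is then
  squeezed between 1 - \<epsilon>/2 and 2^\<epsilon> \<le> 1 + \<epsilon> times the threshold \<alpha> 2^-m, so y_i \<in> M, and (4)
  bounds the number of such i. Since |L - L'| - |L' - L| = |H'| - |H|, hypotheses (c), (6) and
  the estimate of p_UH bound |L - L'| as well. Each index of L (resp. L') contributes at most 2\<alpha>
  to its sum, which turns the counting bounds into (iv) and, removed from (d) and (7), into (v).
  By (i) a gain only occurs where u'(i) = u(i) + 1, and is then at most 2^\<epsilon> - 1 \<le> \<epsilon> times the
  u'-term; Loss - Gain is the difference of the two averages in (v).\<close>

lemma two_powr_le_one_plus:
  assumes "0 \<le> x" "x \<le> 1" shows "2 powr x \<le> 1 + (x::real)"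
proof -
  have "exp ((1 - x) *\<^sub>R 0 + x *\<^sub>R ln 2) \<le> (1 - x) * exp 0 + x * exp (ln 2)"
    by (rule convex_onD[OF exp_convex]) (use assms in auto)
  then show ?thesis by (simp add: powr_def mult.commute)
qed

lemma two_powr_minus_le:
  assumes "0 \<le> x" "x \<le> 1" shows "2 powr (- x) \<le> 1 - (x::real) / 2"
proof -
  have "exp ((1 - x) *\<^sub>R 0 + x *\<^sub>R (- ln 2)) \<le> (1 - x) * exp 0 + x * exp (- ln 2)"
    by (rule convex_onD[OF exp_convex]) (use assms in auto)
  then show ?thesis by (simp add: powr_def mult.commute exp_minus)
qed

lemma enat_diff_one_le: "a \<le> b + 1 \<Longrightarrow> a - 1 \<le> (b :: enat)"
  by (cases a; cases b) (auto simp: one_enat_def)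

lemma prD_nonneg: "0 \<le> prD C n P"
  by (simp add: prD_def)

lemma pw_nonneg: "0 \<le> pw e u"
  by (cases u) (simp_all add: pw_def)

lemma pw_infinity [simp]: "pw e \<infinity> = 0"
  by (simp add: pw_def)

lemma pw_plus_one: "pw e (u + 1) = 2 powr (- e) * pw e u"
proof (cases u)
  case (enat j)
  then have "u + 1 = enat (Suc j)" by (simp add: one_enat_def)
  moreover have "2 powr (- (real (Suc j) * e)) = 2 powr (- e) * 2 powr (- (real j * e))"
    by (simp add: powr_add[symmetric] algebra_simps)
  ultimately show ?thesis using enat by (simp add: pw_def)
qed simp

lemma pw_eq_powr_mult_pw_plus_one: "pw e u = 2 powr e * pw e (u + 1)"
  by (simp add: pw_plus_one powr_minus)

lemma pw_antimono:
  assumes "0 \<le> e" "a \<le> b" shows "pw e b \<le> pw e a"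
proof (cases b)
  case (enat j)
  with assms obtain i where "a = enat i" "i \<le> j" by (cases a) auto
  with enat assms show ?thesis by (simp add: pw_def mult_right_mono)
qed (simp add: pw_nonneg)

lemma pw_le_of_pw_plus_one_less:
  assumes "0 \<le> e" "e \<le> 1" "pw e (u + 1) < T"
  shows "pw e u \<le> (1 + e) * T"
  unfolding pw_eq_powr_mult_pw_plus_one[of e u]
  using assms pw_nonneg[of e "u + 1"] two_powr_le_one_plus[of e]
  by (intro mult_mono) auto

lemma scaled_pw_le_of_pw_plus_one_less:
  assumes "0 \<le> e" "e \<le> 1" "pw e (u + 1) < \<alpha> * 2 powr (- real m)"
  shows "2 ^ m * pw e u \<le> 2 * \<alpha>"
proof -
  have "0 < \<alpha> * 2 powr (- real m)" using assms(3) pw_nonneg[of e "u + 1"] by linarith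
  then have "\<alpha> > 0" by (simp add: zero_less_mult_iff)
  have "2 ^ m * pw e u \<le> 2 ^ m * ((1 + e) * (\<alpha> * 2 powr (- real m)))"
    using pw_le_of_pw_plus_one_less[OF assms] by simp
  also have "\<dots> = (1 + e) * \<alpha>" by (simp add: powr_minus powr_realpow)
  also have "\<dots> \<le> 2 * \<alpha>" using \<open>\<alpha> > 0\<close> assms by simp
  finally show ?thesis .
qed

lemma pw_diff_le_of_le_plus_one:
  assumes "0 \<le> e" "e \<le> 1" "u < v" "v \<le> u + 1"
  shows "pw e u - pw e v \<le> e * pw e v"
proof -
  have "v = u + 1" using ileI1[OF assms(3)] assms(4) by (simp add: eSuc_plus_1)
  then have "pw e u - pw e v = (2 powr e - 1) * pw e v"
    by (simp add: pw_eq_powr_mult_pw_plus_one[of e u] algebra_simps)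
  also have "\<dots> \<le> e * pw e v"
    using two_powr_le_one_plus[OF assms(1,2)] pw_nonneg by (intro mult_right_mono) auto
  finally show ?thesis .
qed

lemma uprime_bucket:
  assumes "uprime C n e y \<noteq> \<infinity>"
  shows "pw e (uprime C n e y + 1) < DC C n y \<and> DC C n y \<le> pw e (uprime C n e y)"
proof -
  define t where "t = nat \<lceil>real n / e\<rceil>"
  define j where "j = (LEAST j. j \<le> t \<and> inBucket C n e j y)"
  have ex: "\<exists>j \<le> t. inBucket C n e j y"
    using assms unfolding uprime_def t_def[symmetric] Let_def by (auto split: if_splits)
  then have "uprime C n e y = enat j"
    unfolding uprime_def t_def[symmetric] j_def by simp
  moreover have "inBucket C n e j y"
    using LeastI_ex[OF ex[unfolded Bex_def]] unfolding j_def by blast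
  ultimately show ?thesis
    by (simp add: inBucket_def pw_def one_enat_def add.commute)
qed

lemma uprime_le_plus_one:
  assumes "0 \<le> e" "e \<le> 1"
    and "uprime C n e y = \<infinity> \<Longrightarrow> v = \<infinity>"
    and "v = \<infinity> \<or> (1 - e / 2) * pw e (v + 1) < DC C n y"
  shows "uprime C n e y \<le> v + 1"
proof (cases "v = \<infinity>")
  case False
  then have fin: "uprime C n e y \<noteq> \<infinity>" and lower: "(1 - e / 2) * pw e (v + 1) < DC C n y"
    using assms(3,4) by auto
  show ?thesis
  proof (rule ccontr)
    assume "\<not> uprime C n e y \<le> v + 1"
    then have "eSuc (v + 1) \<le> uprime C n e y" by (simp add: ileI1)
    then have "pw e (uprime C n e y) \<le> 2 powr (- e) * pw e (v + 1)"
      using pw_antimono[OF assms(1)] by (metis eSuc_plus_1 pw_plus_one)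
    also have "\<dots> \<le> (1 - e / 2) * pw e (v + 1)"
      using two_powr_minus_le[OF assms(1,2)] pw_nonneg by (intro mult_right_mono) auto
    finally show False using lower uprime_bucket[OF fin] by simp
  qed
qed simp

lemma DC_near_threshold:
  assumes "0 \<le> e" "e \<le> 1"
    and "uprime C n e y = \<infinity> \<Longrightarrow> v = \<infinity>"
    and "v = \<infinity> \<or> (1 - e / 2) * pw e (v + 1) < DC C n y"
    and "pw e (uprime C n e y + 1) < T" "T \<le> pw e (v + 1)"
  shows "(1 - 4 * e) * T \<le> DC C n y \<and> DC C n y \<le> (1 + 4 * e) * T"
proof
  have "0 < T" using assms(5) pw_nonneg[of e "uprime C n e y + 1"] by linarith
  then have "v \<noteq> \<infinity>" using assms(6) by (cases v) auto
  then have fin: "uprime C n e y \<noteq> \<infinity>" and lower: "(1 - e / 2) * pw e (v + 1) < DC C n y"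
    using assms(3,4) by auto
  have "(1 - 4 * e) * T \<le> (1 - e / 2) * pw e (v + 1)"
    using assms(1,2,6) \<open>0 < T\<close> by (intro mult_mono) auto
  then show "(1 - 4 * e) * T \<le> DC C n y" using lower by linarith
  have "(1 + e) * T \<le> (1 + 4 * e) * T" using assms(1) \<open>0 < T\<close> by (intro mult_right_mono) auto
  then show "DC C n y \<le> (1 + 4 * e) * T"
    using uprime_bucket[OF fin] pw_le_of_pw_plus_one_less[OF assms(1,2,5)] by linarith
qed

lemma uprime_le_plus_one_on:
  assumes "0 \<le> e" "e \<le> 1"
    and "\<forall>i\<in>I. uprime C n e (y i) = \<infinity> \<longrightarrow> u i = \<infinity>"
    and "\<forall>i\<in>I. u i = \<infinity> \<or> (1 - e / 2) * pw e (u i + 1) < DC C n (y i)"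
  shows "\<forall>i\<in>I. uprime C n e (y i) \<le> u i + 1"
  using assms uprime_le_plus_one[OF assms(1,2)] by simp

lemma threshold_Diff_subset_near_threshold:
  assumes "0 \<le> e" "e \<le> 1"
    and "\<forall>i\<in>I. uprime C n e (y i) = \<infinity> \<longrightarrow> u i = \<infinity>"
    and "\<forall>i\<in>I. u i = \<infinity> \<or> (1 - e / 2) * pw e (u i + 1) < DC C n (y i)"
  shows "{i \<in> I. pw e (uprime C n e (y i) + 1) < T} - {i \<in> I. pw e (u i + 1) < T}
    \<subseteq> {i \<in> I. DC C n (y i) \<in> {(1 - 4 * e) * T .. (1 + 4 * e) * T}}"
proof
  fix i assume i: "i \<in> {i \<in> I. pw e (uprime C n e (y i) + 1) < T} - {i \<in> I. pw e (u i + 1) < T}"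
  have "(1 - 4 * e) * T \<le> DC C n (y i) \<and> DC C n (y i) \<le> (1 + 4 * e) * T"
  proof (rule DC_near_threshold[OF assms(1,2)])
    show "uprime C n e (y i) = \<infinity> \<Longrightarrow> u i = \<infinity>"
      and "u i = \<infinity> \<or> (1 - e / 2) * pw e (u i + 1) < DC C n (y i)"
      using assms(3,4) i by auto
  qed (use i in \<open>auto simp: not_less\<close>)
  with i show "i \<in> {i \<in> I. DC C n (y i) \<in> {(1 - 4 * e) * T .. (1 + 4 * e) * T}}" by simp
qed

lemma Loss_minus_Gain:
  assumes "finite A"
  shows "Loss k m e A u' u - Gain k m e A u' u
    = (1 / real k) * (\<Sum>i\<in>A. 2 ^ m * pw e (u' i)) - (1 / real k) * (\<Sum>i\<in>A. 2 ^ m * pw e (u i))"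
proof -
  have "(\<Sum>i\<in>{i \<in> A. u' i < u i}. 2 ^ m * (pw e (u' i) - pw e (u i)))
      - (\<Sum>i\<in>{i \<in> A. u i < u' i}. 2 ^ m * (pw e (u i) - pw e (u' i)))
      = (\<Sum>i\<in>A. 2 ^ m * (pw e (u' i) - pw e (u i)))"
    unfolding sum.inter_filter[OF assms] sum_subtractf[symmetric]
    by (rule sum.cong) (auto simp: algebra_simps dest: antisym_conv3)
  then show ?thesis
    unfolding Loss_def Gain_def right_diff_distrib[symmetric] by (simp add: sum_subtractf right_diff_distrib)
qed

lemma Gain_le:
  assumes "0 \<le> e" "e \<le> 1" "finite B" "A \<subseteq> B" "\<forall>i\<in>A. u' i \<le> u i + 1"
  shows "Gain k m e A u' u \<le> e * ((1 / real k) * (\<Sum>i\<in>B. 2 ^ m * pw e (u' i)))"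
proof -
  have "(\<Sum>i\<in>{i \<in> A. u i < u' i}. 2 ^ m * (pw e (u i) - pw e (u' i)))
      \<le> (\<Sum>i\<in>{i \<in> A. u i < u' i}. e * (2 ^ m * pw e (u' i)))"
    using assms pw_diff_le_of_le_plus_one[OF assms(1,2)] by (intro sum_mono) auto
  also have "\<dots> \<le> (\<Sum>i\<in>B. e * (2 ^ m * pw e (u' i)))"
    using assms pw_nonneg by (intro sum_mono2) auto
  finally show ?thesis
    unfolding Gain_def sum_distrib_left[symmetric] by (simp add: divide_right_mono)
qed

lemma mean_Int_bounds:
  fixes f :: "nat \<Rightarrow> real"
  assumes "finite L" "0 < K" "0 \<le> c" "\<forall>i\<in>L. 0 \<le> f i \<and> f i \<le> c"
    and "real (card (L - L')) / K \<le> \<delta>"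
  shows "(1 / K) * sum f (L - L') \<le> \<delta> * c"
    and "(1 / K) * sum f L - \<delta> * c \<le> (1 / K) * sum f (L \<inter> L')"
    and "(1 / K) * sum f (L \<inter> L') \<le> (1 / K) * sum f L"
proof -
  have "sum f (L - L') \<le> real (card (L - L')) * c"
    using assms(4) by (intro sum_bounded_above) auto
  then have "(1 / K) * sum f (L - L') \<le> real (card (L - L')) / K * c"
    using assms(2) by (simp add: divide_right_mono)
  also have "\<dots> \<le> \<delta> * c" using assms(5,3) by (rule mult_right_mono)
  finally show diff: "(1 / K) * sum f (L - L') \<le> \<delta> * c" .
  have "(1 / K) * sum f L = (1 / K) * sum f (L \<inter> L') + (1 / K) * sum f (L - L')"
    using sum.Int_Diff[OF assms(1), of f L'] by (simp add: distrib_left)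
  moreover have "0 \<le> (1 / K) * sum f (L - L')"
    using assms(2,4) by (intro mult_nonneg_nonneg sum_nonneg) auto
  ultimately show "(1 / K) * sum f L - \<delta> * c \<le> (1 / K) * sum f (L \<inter> L')"
    and "(1 / K) * sum f (L \<inter> L') \<le> (1 / K) * sum f L"
    using diff by linarith+
qed

lemma card_Diff_eq_card_Diff_plus_card_compl_diff:
  assumes "finite I" "L \<subseteq> I" "L' \<subseteq> I"
  shows "real (card (L - L')) / K
    = real (card (L' - L)) / K + real (card (I - L')) / K - real (card (I - L)) / K"
proof -
  have "\<And>A B. A \<subseteq> I \<Longrightarrow> card (A - B) + card (I - A) = card (I - (A \<inter> B))"
    using assms(1) by (subst card_Un_disjoint[symmetric]) (auto intro: arg_cong[where f = card] finite_subset)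
  from this[OF assms(2)] this[OF assms(3)]
  have "real (card (L - L')) + real (card (I - L)) = real (card (L' - L)) + real (card (I - L'))"
    by (simp add: Int_commute flip: of_nat_add)
  then have "real (card (L - L')) = real (card (L' - L)) + real (card (I - L')) - real (card (I - L))"
    by linarith
  then show ?thesis by (simp add: diff_divide_distrib add_divide_distrib)
qed

theorem mainTheorem8:
  fixes n m k l :: nat
    and C :: "bool list \<Rightarrow> bool list"
    and V :: "bool list \<Rightarrow> bool list \<Rightarrow> bool"
    and \<epsilon> \<alpha> pH pUH :: real
    and y :: "nat \<Rightarrow> bool list"
    and u :: "nat \<Rightarrow> enat"
    and Y :: "nat set"
    and w :: "nat \<Rightarrow> bool list"
  defines "D \<equiv> DC C n"
    and "gH \<equiv> prD C n (\<lambda>z. DC C n z \<ge> \<alpha> * 2 powr (- real m))"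
    and "gUH \<equiv> prU m (\<lambda>z. DC C n z \<ge> \<alpha> * 2 powr (- real m))"
    and "gUY \<equiv> prU m (inV V l)"
    and "u' \<equiv> (\<lambda>i. uprime C n \<epsilon> (y i))"
    and "L \<equiv> {i \<in> {1..k}. pw \<epsilon> (u i + 1) < \<alpha> * 2 powr (- real m)}"
    and "Y' \<equiv> {i \<in> {1..k}. inV V l (y i)}"
    and "L' \<equiv> {i \<in> {1..k}. pw \<epsilon> (uprime C n \<epsilon> (y i) + 1) < \<alpha> * 2 powr (- real m)}"
    and "M \<equiv> {z. DC C n z \<in> {(1 - 4 * \<epsilon>) * \<alpha> * 2 powr (- real m) .. (1 + 4 * \<epsilon>) * \<alpha> * 2 powr (- real m)}}"
  assumes hn: "n \<ge> 1" and hm: "m \<ge> 1" and hk: "k \<ge> 1"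
    and hC: "\<forall>r \<in> bitstrings n. C r \<in> bitstrings m"
    and heps: "0 < \<epsilon>" "\<epsilon> \<le> 1 / 25"
    and halpha: "\<alpha> > 1"
    and hpH01: "pH \<in> {0..1}" and hpUH01: "pUH \<in> {0..1}"
    and hpH: "pH \<in> pm gH (4 / 5 * sqrt \<epsilon>)"
    and hpUH: "pUH \<in> pm gUH (10 * sqrt \<epsilon>)"
    and hy: "\<forall>i \<in> {1..k}. y i \<in> bitstrings m"
    and hY: "Y \<subseteq> {1..k}"
    and hw: "\<forall>i \<in> Y. w i \<in> bitstrings l"
    and ha: "real (card Y) / real k \<in> pm gUY \<epsilon>"
    and hb: "\<forall>i \<in> Y. V (y i) (w i)"
    and hc: "real (card ({1..k} - L)) / real k \<in> pm pUH (3 * sqrt \<epsilon>)"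
    and hd: "(1 / real k) * (\<Sum>i \<in> L. 2 ^ m * pw \<epsilon> (u i)) \<in> pm (1 - pH) (5 * sqrt \<epsilon>)"
    and h1: "prD C n (\<lambda>z. z \<in> M) \<le> sqrt \<epsilon>"
    and h2: "\<forall>i \<in> {1..k}. u' i = \<infinity> \<longrightarrow> u i = \<infinity>"
    and h3: "\<forall>i \<in> {1..k}. u i = \<infinity> \<or> D (y i) > (1 - \<epsilon> / 2) * pw \<epsilon> (u i + 1)"
    and h4: "real (card {i \<in> {1..k}. y i \<in> M}) / real k < 3 * sqrt \<epsilon> / \<alpha>"
    and h5: "real (card Y') / real k \<in> pm gUY \<epsilon>"
    and h6: "real (card ({1..k} - L')) / real k \<in> pm gUH (3 * sqrt \<epsilon>)"
    and h7: "(1 / real k) * (\<Sum>i \<in> L'. 2 ^ m * pw \<epsilon> (u' i)) \<in> pm (1 - gH) (5 * sqrt \<epsilon>)"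
  shows "(\<forall>i \<in> {1..k}. u i \<ge> u' i - 1)
    \<and> real (card (L' - L)) \<le> 3 * real k * sqrt \<epsilon>
    \<and> real (card (L - L')) \<le> 19 * real k * sqrt \<epsilon>
    \<and> (1 / real k) * (\<Sum>i \<in> L' - L. 2 ^ m * pw \<epsilon> (u' i)) \<le> 6 * sqrt \<epsilon> * \<alpha>
    \<and> (1 / real k) * (\<Sum>i \<in> L - L'. 2 ^ m * pw \<epsilon> (u i)) \<le> 38 * sqrt \<epsilon> * \<alpha>
    \<and> (1 / real k) * (\<Sum>i \<in> L \<inter> L'. 2 ^ m * pw \<epsilon> (u i)) \<in> pm (1 - gH) (44 * sqrt \<epsilon> * \<alpha>)
    \<and> (1 / real k) * (\<Sum>i \<in> L \<inter> L'. 2 ^ m * pw \<epsilon> (u' i)) \<in> pm (1 - gH) (11 * sqrt \<epsilon> * \<alpha>)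
    \<and> Gain k m \<epsilon> (L \<inter> L') u' u \<le> 4 * \<epsilon>
    \<and> Loss k m \<epsilon> (L \<inter> L') u' u \<le> 59 * sqrt \<epsilon> * \<alpha>"
proof -
  define f where "f = (\<lambda>i. 2 ^ m * pw \<epsilon> (u i) :: real)"
  define f' where "f' = (\<lambda>i. 2 ^ m * pw \<epsilon> (u' i) :: real)"
  have e: "0 \<le> \<epsilon>" "\<epsilon> \<le> 1" and k: "0 < real k" and two_alpha: "0 \<le> 2 * \<alpha>"
    using heps hk halpha by auto
  have sqrt_eps: "\<epsilon> \<le> sqrt \<epsilon>" "sqrt \<epsilon> \<le> 1 / 5" "sqrt \<epsilon> \<le> sqrt \<epsilon> * \<alpha>"
    using heps halpha real_sqrt_le_iff[of \<epsilon> "1 / 25"]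
    by (auto simp: real_le_rsqrt power2_eq_square mult_le_cancel_left1 real_sqrt_divide)
  have L_sub: "L \<subseteq> {1..k}" "L' \<subseteq> {1..k}" by (auto simp: L_def L'_def)
  then have fin: "finite L" "finite L'" by (auto intro: finite_subset)
  have part_i: "\<forall>i\<in>{1..k}. u' i \<le> u i + 1"
    using uprime_le_plus_one_on[OF e] h2 h3 unfolding u'_def D_def by blast
  have "L' - L \<subseteq> {i \<in> {1..k}. y i \<in> M}"
    using threshold_Diff_subset_near_threshold[OF e, of "{1..k}" C n y u "\<alpha> * 2 powr (- real m)"] h2 h3
    unfolding L_def L'_def M_def u'_def D_def by (simp add: mult.assoc)
  then have "card (L' - L) \<le> card {i \<in> {1..k}. y i \<in> M}" by (intro card_mono) auto
  then have "real (card (L' - L)) / real k \<le> real (card {i \<in> {1..k}. y i \<in> M}) / real k"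
    using k by (simp add: divide_right_mono)
  with h4 have card_ii: "real (card (L' - L)) / real k \<le> 3 * sqrt \<epsilon> / \<alpha>" by linarith
  moreover have "3 * sqrt \<epsilon> / \<alpha> \<le> 3 * sqrt \<epsilon>"
    using halpha sqrt_eps by (simp add: divide_le_eq)
  ultimately have card_ii': "real (card (L' - L)) / real k \<le> 3 * sqrt \<epsilon>" by linarith
  then have card_iii: "real (card (L - L')) / real k \<le> 19 * sqrt \<epsilon>"
    using card_Diff_eq_card_Diff_plus_card_compl_diff[OF _ L_sub, of "real k"] hc h6 hpUH
    unfolding pm_def by simp
  have f_bounds: "\<forall>i\<in>L. 0 \<le> f i \<and> f i \<le> 2 * \<alpha>" "\<forall>i\<in>L'. 0 \<le> f' i \<and> f' i \<le> 2 * \<alpha>"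
    by (auto simp: L_def L'_def f_def f'_def u'_def pw_nonneg
        intro!: scaled_pw_le_of_pw_plus_one_less[OF e])
  note mean_L = mean_Int_bounds[of L "real k" "2 * \<alpha>" f L', OF fin(1) k two_alpha f_bounds(1) card_iii]
  note mean_L' = mean_Int_bounds[of L' "real k" "2 * \<alpha>" f' L, OF fin(2) k two_alpha f_bounds(2) card_ii,
    unfolded Int_commute[of L' L]]
  have mean_diff: "(1 / real k) * sum f' (L' - L) \<le> 6 * sqrt \<epsilon> * \<alpha>"
    "(1 / real k) * sum f (L - L') \<le> 38 * sqrt \<epsilon> * \<alpha>"
    using mean_L(1) mean_L'(1) halpha sqrt_eps by auto
  have mean_common: "(1 / real k) * sum f (L \<inter> L') \<in> pm (1 - gH) (44 * sqrt \<epsilon> * \<alpha>)"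
    "(1 / real k) * sum f' (L \<inter> L') \<in> pm (1 - gH) (11 * sqrt \<epsilon> * \<alpha>)"
    using mean_L(2,3) mean_L'(2,3) hd hpH h7 halpha sqrt_eps unfolding pm_def f_def f'_def by auto
  have "\<forall>i\<in>L \<inter> L'. u' i \<le> u i + 1" using part_i L_sub by blast
  then have gain_mean: "Gain k m \<epsilon> (L \<inter> L') u' u \<le> \<epsilon> * ((1 / real k) * sum f' L')"
    unfolding f'_def by (rule Gain_le[OF e fin(2) Int_lower2])
  have "(1 / real k) * sum f' L' \<le> 2"
    using h7 sqrt_eps prD_nonneg[of C n "\<lambda>z. \<alpha> * 2 powr (- real m) \<le> DC C n z"]
    unfolding pm_def f'_def gH_def by auto
  from mult_left_mono[OF this e(1)] gain_mean e
  have gain: "Gain k m \<epsilon> (L \<inter> L') u' u \<le> 4 * \<epsilon>" by linarith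
  have "Loss k m \<epsilon> (L \<inter> L') u' u \<le> 59 * sqrt \<epsilon> * \<alpha>"
    using Loss_minus_Gain[of "L \<inter> L'" k m \<epsilon> u' u] fin gain mean_common sqrt_eps
    unfolding pm_def f_def f'_def by auto
  with part_i mean_diff mean_common card_ii' card_iii gain k show ?thesis
    unfolding f_def f'_def by (auto simp: field_simps enat_diff_one_le)
qed

end
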